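(* There exists a real Banach space $Y$ such that for every $\varepsilon>0$ there exists an $\varepsilon$-convex set $A$ contained in the closed unit ball of $Y$ with $\mathcal{H}(A,\operatorname{Co}(A))=2$.
   Context: For $\varepsilon>0$, a set $A$ is $\varepsilon$-convex if $d(ta+(1-t)b,A)\le\varepsilon$ for all $a,b\in A$ and $t\in[0,1]$, where $d(x,A)=\inf_{a\in A}\|x-a\|$. $\mathcal{H}$ is the Hausdorff distance and $\operatorname{Co}$ the convex hull. *)

theory Defs
  imports "HOL-Analysis.Analysis"
begin

definition eps_convex :: "real \<Rightarrow> 'a::real_normed_vector set \<Rightarrow> bool" where
  "eps_convex eps A \<longleftrightarrow>
     (\<forall>a\<in>A. \<forall>b\<in>A. \<forall>t\<in>{0..1::real}. infdist (t *\<^sub>R a + (1 - t) *\<^sub>R b) A \<le> eps)"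

definition hausdorff_dist :: "'a::metric_space set \<Rightarrow> 'a set \<Rightarrow> ereal" where
  "hausdorff_dist A B =
     max (SUP a\<in>A. ereal (infdist a B)) (SUP b\<in>B. ereal (infdist b A))"

end

theory Submission
  imports Defs
begin

text \<open>We work in the space of bounded real sequences. At level m consider the
  probability vectors p on N = 2^(m^2) points whose weights are at least 2 delta, and for
  every rational weight vector r \<ge> delta the functional p \<mapsto> kappa KL(p || r) - 1, where
  kappa = 2 / (-ln delta) makes its values lie in [-1, 1]. Since KL(- || r) is the negative
  entropy plus a linear function, and the concavity defect of the entropy is at most 1, each
  such functional is affine up to kappa. Using all these functionals of all levels
  m \<ge> m0 as coordinates embeds the product of the simplices onto a set A that is
  kappa(m0)-convex. The barycenter of the images of the N near-vertices of level m has,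
  by Gibbs' inequality, coordinate about kappa ln N - 1 \<approx> 1 at every r of level m,
  while each point of A has a coordinate r close to its own p where its value is about -1.
  So the barycenters get arbitrarily close to distance 2 from A.\<close>

section \<open>Epsilon-convexity and Hausdorff distance\<close>

lemma exists_nat_ge_const_over_less:
  fixes c e :: real
  assumes "0 < e"
  shows "\<exists>n\<ge>k. c / real n < e"
proof -
  have "\<forall>\<^sub>F n in sequentially. k \<le> n \<and> c / real n < e"
    using eventually_ge_at_top order_tendstoD(2)[OF lim_const_over_n assms]
    by (rule eventually_conj)
  then show ?thesis
    by (auto simp: eventually_sequentially)
qed

lemma eps_convexI:
  assumes "\<And>a b t. a \<in> A \<Longrightarrow> b \<in> A \<Longrightarrow> 0 \<le> t \<Longrightarrow> t \<le> 1
             \<Longrightarrow> \<exists>c\<in>A. dist (t *\<^sub>R a + (1 - t) *\<^sub>R b) c \<le> eps"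
  shows "eps_convex eps A"
  unfolding eps_convex_def using assms by (fastforce intro: infdist_le2)

lemma eps_convex_mono: "eps_convex eps A \<Longrightarrow> eps \<le> eps' \<Longrightarrow> eps_convex eps' A"
  unfolding eps_convex_def by force

lemma hausdorff_dist_convex_hull_eq_2:
  fixes A :: "'a::real_normed_vector set"
  assumes ball: "A \<subseteq> cball 0 1"
    and far: "\<And>e. 0 < e \<Longrightarrow> \<exists>c\<in>convex hull A. 2 - e \<le> infdist c A"
  shows "hausdorff_dist A (convex hull A) = 2"
proof -
  obtain a0 where a0: "a0 \<in> A"
    using far[of 1] by fastforce
  have "(SUP a\<in>A. ereal (infdist a (convex hull A))) = 0"
  proof -
    have "(SUP a\<in>A. ereal (infdist a (convex hull A))) = (SUP a\<in>A. 0)"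
      by (intro SUP_cong) (simp_all add: hull_inc zero_ereal_def)
    also have "\<dots> = 0"
      using a0 by (intro SUP_const) blast
    finally show ?thesis .
  qed
  moreover have "(SUP c\<in>convex hull A. ereal (infdist c A)) = 2"
  proof (rule antisym)
    have hull_ball: "convex hull A \<subseteq> cball 0 1"
      by (intro hull_minimal ball convex_cball)
    have "infdist c A \<le> 2" if "c \<in> convex hull A" for c
    proof -
      have "norm c \<le> 1" "norm a0 \<le> 1"
        using that a0 ball hull_ball by auto
      then have "dist c a0 \<le> 2"
        using norm_triangle_ineq4[of c a0] by (simp add: dist_norm)
      then show ?thesis
        using infdist_le[OF a0, of c] by simp
    qed
    then show "(SUP c\<in>convex hull A. ereal (infdist c A)) \<le> 2"
      by (intro SUP_least) simp
    show "2 \<le> (SUP c\<in>convex hull A. ereal (infdist c A))"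
    proof (rule ereal_le_epsilon2)
      fix e :: real
      assume "0 < e"
      then obtain c where "c \<in> convex hull A" "2 - e \<le> infdist c A"
        using far by blast
      then have "ereal 2 \<le> ereal (infdist c A) + ereal e"
        by simp
      also have "\<dots> \<le> (SUP c\<in>convex hull A. ereal (infdist c A)) + ereal e"
        using \<open>c \<in> convex hull A\<close> by (intro add_right_mono SUP_upper)
      finally show "2 \<le> (SUP c\<in>convex hull A. ereal (infdist c A)) + ereal e"
        by simp
    qed
  qed
  ultimately show ?thesis
    by (simp add: hausdorff_dist_def)
qed

section \<open>Inequalities for x ln x\<close>

lemma ln_ge_one_minus_inverse: "0 < x \<Longrightarrow> 1 - 1 / x \<le> ln (x::real)"
  using ln_le_minus_one[of "1 / x"] by (simp add: ln_div)

lemma x_minus_one_le_xlnx: "0 \<le> x \<Longrightarrow> x - 1 \<le> x * ln (x::real)"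
  using ln_ge_one_minus_inverse[of x] mult_left_mono[of "1 - 1/x" "ln x" x]
  by (cases "x = 0") (auto simp: field_simps)

lemma convex_on_xlnx: "convex_on {0<..} (\<lambda>x::real. x * ln x)"
proof (rule f''_ge0_imp_convex)
  show "((\<lambda>x. x * ln x) has_real_derivative ln x + 1) (at x)" if "x \<in> {0<..}" for x
    using that by (auto intro!: derivative_eq_intros)
  show "((\<lambda>x. ln x + 1) has_real_derivative 1 / x) (at x)" if "x \<in> {0<..}" for x
    using that by (auto intro!: derivative_eq_intros simp: field_simps)
qed auto

lemma xlnx_convex:
  fixes a b t :: real
  assumes "0 < a" "0 < b" "0 \<le> t" "t \<le> 1"
  shows "(t * a + (1 - t) * b) * ln (t * a + (1 - t) * b) \<le> t * (a * ln a) + (1 - t) * (b * ln b)"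
  using convex_onD[OF convex_on_xlnx, of "1 - t" a b] assms by simp

lemma xlnx_convex_defect_le:
  fixes a b t :: real
  assumes a: "0 < a" and b: "0 < b" and t: "0 \<le> t" "t \<le> 1"
  shows "t * (a * ln a) + (1 - t) * (b * ln b) - (t * a + (1 - t) * b) * ln (t * a + (1 - t) * b)
           \<le> (1 - t) * a + t * b"
proof (cases "t = 0 \<or> t = 1")
  case False
  with t have t: "0 < t" "t < 1" by auto
  define c where "c = t * a + (1 - t) * b"
  have "t * a * (ln t + ln a) + (1 - t) * b * (ln (1 - t) + ln b)
      = t * a * ln (t * a) + (1 - t) * b * ln ((1 - t) * b)"
    using a b t by (simp add: ln_mult_pos)
  also have "\<dots> \<le> t * a * ln c + (1 - t) * b * ln c"
    using a b t by (intro add_mono mult_left_mono ln_mono) (auto simp: c_def)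
  also have "\<dots> = c * ln c"
    by (simp add: c_def algebra_simps)
  finally have "t * (a * ln a) + (1 - t) * (b * ln b) + a * (t * ln t) + b * ((1 - t) * ln (1 - t))
      \<le> c * ln c"
    by (simp add: algebra_simps)
  moreover have "a * (t - 1) \<le> a * (t * ln t)"
    using x_minus_one_le_xlnx[of t] a t by (intro mult_left_mono) auto
  moreover have "b * (- t) \<le> b * ((1 - t) * ln (1 - t))"
    using x_minus_one_le_xlnx[of "1 - t"] b t by (intro mult_left_mono) auto
  ultimately show ?thesis
    by (simp add: c_def algebra_simps)
qed (use a b in auto)

section \<open>Entropy and Kullback-Leibler divergence\<close>

definition neg_entropy :: "'a set \<Rightarrow> ('a \<Rightarrow> real) \<Rightarrow> real" where
  "neg_entropy J p = (\<Sum>j\<in>J. p j * ln (p j))"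

definition kl_div :: "'a set \<Rightarrow> ('a \<Rightarrow> real) \<Rightarrow> ('a \<Rightarrow> real) \<Rightarrow> real" where
  "kl_div J p q = (\<Sum>j\<in>J. p j * ln (p j / q j))"

lemma kl_div_eq_neg_entropy_minus_cross:
  assumes "\<And>j. j \<in> J \<Longrightarrow> 0 < p j" "\<And>j. j \<in> J \<Longrightarrow> 0 < q j"
  shows "kl_div J p q = neg_entropy J p - (\<Sum>j\<in>J. p j * ln (q j))"
  unfolding kl_div_def neg_entropy_def sum_subtractf[symmetric]
  using assms by (intro sum.cong refl) (simp add: ln_divide_pos right_diff_distrib)

lemma kl_div_nonneg:
  assumes "\<And>j. j \<in> J \<Longrightarrow> 0 < p j" "\<And>j. j \<in> J \<Longrightarrow> 0 < q j" "sum q J \<le> sum p J"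
  shows "0 \<le> kl_div J p q"
proof -
  have "p j - q j \<le> p j * ln (p j / q j)" if "j \<in> J" for j
    using ln_ge_one_minus_inverse[of "p j / q j"] mult_left_mono[of _ _ "p j"] assms that
    by (fastforce simp: field_simps)
  then have "sum p J - sum q J \<le> kl_div J p q"
    unfolding kl_div_def sum_subtractf[symmetric] by (rule sum_mono)
  with assms(3) show ?thesis by simp
qed

lemma neg_entropy_nonpos:
  assumes "\<And>j. j \<in> J \<Longrightarrow> 0 \<le> p j \<and> p j \<le> 1"
  shows "neg_entropy J p \<le> 0"
  unfolding neg_entropy_def using assms
  by (intro sum_nonpos) (metis ln_le_zero_iff mult_nonneg_nonpos mult_zero_left order_le_less)

lemma kl_div_le_neg_ln:
  assumes "finite J" "\<And>j. j \<in> J \<Longrightarrow> 0 < p j" "sum p J = 1" "0 < \<delta>" "\<And>j. j \<in> J \<Longrightarrow> \<delta> \<le> q j"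
  shows "kl_div J p q \<le> - ln \<delta>"
proof -
  have p_le_1: "p j \<le> 1" if "j \<in> J" for j
    using member_le_sum[of j J p] assms that by (simp add: less_imp_le)
  have "kl_div J p q \<le> (\<Sum>j\<in>J. p j * ln (p j) - p j * ln \<delta>)"
  proof (unfold kl_div_def, intro sum_mono)
    fix j assume j: "j \<in> J"
    have "0 < p j" "\<delta> \<le> q j"
      using assms j by auto
    moreover from this have "0 < q j" "ln \<delta> \<le> ln (q j)"
      using assms(4) by auto
    ultimately show "p j * ln (p j / q j) \<le> p j * ln (p j) - p j * ln \<delta>"
      by (simp add: ln_divide_pos right_diff_distrib)
  qed
  also have "\<dots> = neg_entropy J p - ln \<delta>"
    by (simp add: neg_entropy_def sum_subtractf sum_distrib_right[symmetric] assms(3))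
  also have "\<dots> \<le> - ln \<delta>"
    using neg_entropy_nonpos[of J p] assms(2) p_le_1 by (simp add: less_imp_le)
  finally show ?thesis .
qed

lemma convex_comb_pos:
  fixes x y t :: real
  assumes "0 < x" "0 < y" "0 \<le> t" "t \<le> 1"
  shows "0 < t * x + (1 - t) * y"
  using assms by (cases "t = 1") (auto intro: add_pos_nonneg add_nonneg_pos)

lemma neg_entropy_convex_defect:
  assumes p: "\<And>j. j \<in> J \<Longrightarrow> 0 < p j" "sum p J = 1"
    and p': "\<And>j. j \<in> J \<Longrightarrow> 0 < p' j" "sum p' J = 1"
    and t: "0 \<le> t" "t \<le> 1"
  defines "defect \<equiv> t * neg_entropy J p + (1 - t) * neg_entropy J p'
                      - neg_entropy J (\<lambda>j. t * p j + (1 - t) * p' j)"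
  shows "0 \<le> defect" "defect \<le> 1"
proof -
  define d where "d j = t * (p j * ln (p j)) + (1 - t) * (p' j * ln (p' j))
                       - (t * p j + (1 - t) * p' j) * ln (t * p j + (1 - t) * p' j)" for j
  have defect: "defect = sum d J"
    by (simp add: defect_def d_def neg_entropy_def sum_subtractf sum.distrib sum_distrib_left)
  show "0 \<le> defect"
    unfolding defect using p p' t xlnx_convex by (intro sum_nonneg) (simp add: d_def)
  have "sum d J \<le> (\<Sum>j\<in>J. (1 - t) * p j + t * p' j)"
    using p p' t xlnx_convex_defect_le by (intro sum_mono) (simp add: d_def)
  also have "\<dots> = 1"
    using p p' by (simp add: sum.distrib sum_distrib_left[symmetric])
  finally show "defect \<le> 1"
    unfolding defect .
qed

lemma kl_div_convex_defect:
  assumes "\<And>j. j \<in> J \<Longrightarrow> 0 < p j" "\<And>j. j \<in> J \<Longrightarrow> 0 < p' j" "\<And>j. j \<in> J \<Longrightarrow> 0 < q j"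
    and "0 \<le> t" "t \<le> 1"
  shows "t * kl_div J p q + (1 - t) * kl_div J p' q - kl_div J (\<lambda>j. t * p j + (1 - t) * p' j) q
       = t * neg_entropy J p + (1 - t) * neg_entropy J p' - neg_entropy J (\<lambda>j. t * p j + (1 - t) * p' j)"
proof -
  have "(\<Sum>j\<in>J. (t * p j + (1 - t) * p' j) * ln (q j))
      = (\<Sum>j\<in>J. t * (p j * ln (q j)) + (1 - t) * (p' j * ln (q j)))"
    by (simp add: algebra_simps)
  also have "\<dots> = t * (\<Sum>j\<in>J. p j * ln (q j)) + (1 - t) * (\<Sum>j\<in>J. p' j * ln (q j))"
    by (simp add: sum.distrib sum_distrib_left)
  finally have "(\<Sum>j\<in>J. (t * p j + (1 - t) * p' j) * ln (q j))
      = t * (\<Sum>j\<in>J. p j * ln (q j)) + (1 - t) * (\<Sum>j\<in>J. p' j * ln (q j))" .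
  moreover have "kl_div J (\<lambda>j. t * p j + (1 - t) * p' j) q
      = neg_entropy J (\<lambda>j. t * p j + (1 - t) * p' j) - (\<Sum>j\<in>J. (t * p j + (1 - t) * p' j) * ln (q j))"
    using assms convex_comb_pos by (intro kl_div_eq_neg_entropy_minus_cross) auto
  ultimately show ?thesis
    using assms by (simp add: kl_div_eq_neg_entropy_minus_cross[of J p]
        kl_div_eq_neg_entropy_minus_cross[of J p'] algebra_simps)
qed

lemma sum_ln_le_card_ln_card:
  assumes "finite J" "\<And>j. j \<in> J \<Longrightarrow> 0 < q j" "sum q J \<le> 1"
  shows "(\<Sum>j\<in>J. ln (q j)) \<le> - card J * ln (card J)"
proof (cases "J = {}")
  case False
  define N where "N = real (card J)"
  have N: "0 < N"
    using assms(1) False by (simp add: N_def card_gt_0_iff)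
  have "0 \<le> kl_div J (\<lambda>_. 1 / N) q"
    using assms N by (intro kl_div_nonneg) (auto simp: N_def)
  also have "\<dots> = (\<Sum>j\<in>J. (- ln N - ln (q j)) / N)"
    unfolding kl_div_def using assms(2) N
    by (intro sum.cong refl) (fastforce simp: ln_div ln_mult)
  also have "\<dots> = (- N * ln N - (\<Sum>j\<in>J. ln (q j))) / N"
    by (simp add: sum_divide_distrib[symmetric] sum_subtractf N_def)
  finally show ?thesis
    using N by (simp add: N_def divide_simps)
qed simp

lemma sum_kl_div_ge:
  assumes "finite J" "\<And>k j. k \<in> K \<Longrightarrow> j \<in> J \<Longrightarrow> 0 < p k j"
    and "\<And>j. j \<in> J \<Longrightarrow> (\<Sum>k\<in>K. p k j) = 1"
    and "\<And>j. j \<in> J \<Longrightarrow> 0 < q j" "sum q J \<le> 1"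
  shows "(\<Sum>k\<in>K. neg_entropy J (p k)) + card J * ln (card J) \<le> (\<Sum>k\<in>K. kl_div J (p k) q)"
proof -
  have "(\<Sum>k\<in>K. \<Sum>j\<in>J. p k j * ln (q j)) = (\<Sum>j\<in>J. \<Sum>k\<in>K. p k j * ln (q j))"
    by (rule sum.swap)
  also have "\<dots> = (\<Sum>j\<in>J. ln (q j))"
    using assms(3) by (simp add: sum_distrib_right[symmetric])
  finally have "(\<Sum>k\<in>K. kl_div J (p k) q) = (\<Sum>k\<in>K. neg_entropy J (p k)) - (\<Sum>j\<in>J. ln (q j))"
    using assms by (simp add: kl_div_eq_neg_entropy_minus_cross sum_subtractf)
  with sum_ln_le_card_ln_card[OF assms(1,4,5)] show ?thesis
    by simp
qed

lemma kl_div_le_of_approx_below: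
  assumes "\<And>j. j \<in> J \<Longrightarrow> \<delta> \<le> q j \<and> q j \<le> p j \<and> p j \<le> q j + e"
    and "0 < \<delta>" "sum p J = 1"
  shows "kl_div J p q \<le> e / \<delta>"
proof -
  have "kl_div J p q \<le> (\<Sum>j\<in>J. p j * (e / \<delta>))"
  proof (unfold kl_div_def, intro sum_mono)
    fix j assume "j \<in> J"
    with assms have q: "0 < q j" "\<delta> \<le> q j" "q j \<le> p j" "p j - q j \<le> e"
      by force+
    then have "ln (p j / q j) \<le> (p j - q j) / q j"
      using ln_le_minus_one[of "p j / q j"] by (simp add: diff_divide_distrib)
    also have "\<dots> \<le> e / \<delta>"
      using q assms(2) by (intro frac_le) auto
    finally show "p j * ln (p j / q j) \<le> p j * (e / \<delta>)"
      using q by (intro mult_left_mono) auto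
  qed
  also have "\<dots> = e / \<delta>"
    using assms(3) by (simp add: sum_distrib_right[symmetric] del: times_divide_eq_right)
  finally show ?thesis .
qed

lemma exists_rat_list_approx_below:
  fixes p :: "nat \<Rightarrow> real"
  assumes "0 < e"
  shows "\<exists>r. length r = n \<and> (\<forall>j<n. p j - e < of_rat (r ! j) \<and> of_rat (r ! j) < p j)"
proof -
  have "\<forall>j. \<exists>x. p j - e < of_rat x \<and> of_rat x < p j"
    using of_rat_dense assms by simp
  then obtain q where "\<And>j. p j - e < of_rat (q j) \<and> of_rat (q j) < p j"
    by metis
  then show ?thesis
    by (intro exI[of _ "map q [0..<n]"]) simp
qed

section \<open>The levels of the construction\<close>

text \<open>Level m lives on N = 2^(m^2) points, weights are bounded below by
  delta = 2^-(m^2 + m), and kappa = 2 / (-ln delta) rescales Kullback-Leibler divergences,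
  which then lie in [0, -ln delta], to [0, 2].\<close>

definition level_dim :: "nat \<Rightarrow> nat" where
  "level_dim m = 2 ^ (m * m)"

definition level_floor :: "nat \<Rightarrow> real" where
  "level_floor m = 1 / 2 ^ (m * m + m)"

definition level_scale :: "nat \<Rightarrow> real" where
  "level_scale m = 2 / (real m * (real m + 1) * ln 2)"

lemma level_dim_pos: "0 < level_dim m"
  by (simp add: level_dim_def)

lemma level_floor_pos: "0 < level_floor m"
  by (simp add: level_floor_def)

lemma level_dim_times_floor: "real (level_dim m) * level_floor m = 1 / 2 ^ m"
  by (simp add: level_dim_def level_floor_def power_add)

lemma ln_level_floor: "ln (level_floor m) = - (real m * (real m + 1) * ln 2)"
  by (simp add: level_floor_def ln_div ln_realpow algebra_simps)

lemma ln_level_dim: "ln (level_dim m) = real m * real m * ln 2"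
  by (simp add: level_dim_def ln_realpow)

lemma level_scale_nonneg: "0 \<le> level_scale m"
  by (simp add: level_scale_def)

lemma level_scale_pos: "1 \<le> m \<Longrightarrow> 0 < level_scale m"
  by (simp add: level_scale_def)

lemma level_scale_times_ln_floor: "1 \<le> m \<Longrightarrow> level_scale m * - ln (level_floor m) = 2"
  by (simp add: level_scale_def ln_level_floor)

lemma level_scale_le: "1 \<le> m \<Longrightarrow> level_scale m \<le> 2 / real m"
proof -
  assume m: "1 \<le> m"
  have "1 / 2 \<le> ln (2::real)"
    using ln_ge_one_minus_inverse[of 2] by simp
  then have "real m * 1 \<le> real m * ((real m + 1) * ln 2)"
    using m by (intro mult_left_mono) (auto intro: order_trans[of _ "2 * ln 2"])
  then show ?thesis
    using m by (simp add: level_scale_def frac_le mult.assoc)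
qed

lemma level_scale_antimono: "1 \<le> m \<Longrightarrow> m \<le> m' \<Longrightarrow> level_scale m' \<le> level_scale m"
  unfolding level_scale_def
  by (intro divide_left_mono mult_right_mono mult_mono) auto

lemma level_scale_asymptotics:
  assumes "1 \<le> m"
  shows "2 - 10 / real m
    \<le> level_scale m * (ln (level_dim m) - 2 * level_dim m * level_floor m * (1 - ln (level_floor m)))"
proof -
  have "real m \<noteq> 0" "real m + 1 \<noteq> 0" "ln (2::real) \<noteq> 0"
    using assms by auto
  then have main: "level_scale m * ln (level_dim m) = 2 - 2 / (real m + 1)"
    unfolding level_scale_def ln_level_dim by (simp add: divide_simps)
  have "level_scale m \<le> 2"
    using level_scale_le[OF assms] assms by (simp add: divide_le_eq order_trans)
  then have "level_scale m * (1 - ln (level_floor m)) \<le> 4"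
    using level_scale_times_ln_floor[OF assms] by (simp add: right_diff_distrib)
  moreover have "2 * real (level_dim m) * level_floor m \<le> 2 / (real m + 1)"
  proof -
    have "real m + 1 \<le> 2 ^ m"
      by (induction m) auto
    then show ?thesis
      using level_dim_times_floor[of m] by (simp add: mult.assoc frac_le)
  qed
  moreover have "0 \<le> level_scale m * (1 - ln (level_floor m))"
    using level_scale_pos[OF assms] by (simp add: ln_level_floor)
  ultimately have "(2 * level_dim m * level_floor m) * (level_scale m * (1 - ln (level_floor m)))
      \<le> (2 / (real m + 1)) * 4"
    by (intro mult_mono) auto
  moreover have "10 / (real m + 1) \<le> 10 / real m"
    using assms by (intro divide_left_mono) auto
  ultimately show ?thesis
    using main by (simp add: algebra_simps)
qed

definition level_simplex :: "nat \<Rightarrow> (nat \<Rightarrow> real) set" where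
  "level_simplex m =
     {p. (\<forall>j<level_dim m. 2 * level_floor m \<le> p j) \<and> (\<Sum>j<level_dim m. p j) = 1}"

definition rat_vec :: "rat list \<Rightarrow> nat \<Rightarrow> real" where
  "rat_vec r j = of_rat (r ! j)"

definition rat_weights :: "nat \<Rightarrow> rat list \<Rightarrow> bool" where
  "rat_weights m r \<longleftrightarrow> length r = level_dim m \<and>
     (\<forall>j<level_dim m. level_floor m \<le> rat_vec r j) \<and> (\<Sum>j<level_dim m. rat_vec r j) \<le> 1"

definition level_coord :: "nat \<Rightarrow> (nat \<Rightarrow> real) \<Rightarrow> rat list \<Rightarrow> real" where
  "level_coord m p r = level_scale m * kl_div {..<level_dim m} p (rat_vec r) - 1"

lemma level_simplex_pos: "p \<in> level_simplex m \<Longrightarrow> j < level_dim m \<Longrightarrow> 0 < p j"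
  unfolding level_simplex_def using level_floor_pos[of m] by force

lemma rat_weights_pos: "rat_weights m r \<Longrightarrow> j < level_dim m \<Longrightarrow> 0 < rat_vec r j"
  unfolding rat_weights_def using level_floor_pos[of m] by force

lemma abs_level_coord_le:
  assumes "1 \<le> m" "p \<in> level_simplex m" "rat_weights m r"
  shows "\<bar>level_coord m p r\<bar> \<le> 1"
proof -
  have "0 \<le> kl_div {..<level_dim m} p (rat_vec r)"
    using assms level_simplex_pos rat_weights_pos
    by (intro kl_div_nonneg) (auto simp: level_simplex_def rat_weights_def)
  moreover have "kl_div {..<level_dim m} p (rat_vec r) \<le> - ln (level_floor m)"
    using assms level_simplex_pos level_floor_pos
    by (intro kl_div_le_neg_ln) (auto simp: level_simplex_def rat_weights_def)
  ultimately have "0 \<le> level_scale m * kl_div {..<level_dim m} p (rat_vec r)"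
    "level_scale m * kl_div {..<level_dim m} p (rat_vec r) \<le> 2"
    using level_scale_pos[OF assms(1)] level_scale_times_ln_floor[OF assms(1)]
    by (auto intro: order_trans[OF mult_left_mono])
  then show ?thesis
    by (simp add: level_coord_def)
qed

lemma level_simplex_convex_comb:
  assumes "p \<in> level_simplex m" "p' \<in> level_simplex m" "0 \<le> t" "t \<le> 1"
  shows "(\<lambda>j. t * p j + (1 - t) * p' j) \<in> level_simplex m"
proof -
  have "2 * level_floor m \<le> t * p j + (1 - t) * p' j" if "j < level_dim m" for j
  proof -
    have "t * (2 * level_floor m) + (1 - t) * (2 * level_floor m) \<le> t * p j + (1 - t) * p' j"
      using assms that by (intro add_mono mult_left_mono) (auto simp: level_simplex_def)
    then show ?thesis
      by (simp add: algebra_simps)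
  qed
  moreover have "(\<Sum>j<level_dim m. t * p j + (1 - t) * p' j) = 1"
    using assms by (simp add: level_simplex_def sum.distrib sum_distrib_left[symmetric])
  ultimately show ?thesis
    by (simp add: level_simplex_def)
qed

lemma level_coord_convex_defect:
  assumes "1 \<le> m" "p \<in> level_simplex m" "p' \<in> level_simplex m" "rat_weights m r"
    and "0 \<le> t" "t \<le> 1"
  defines "defect \<equiv> t * level_coord m p r + (1 - t) * level_coord m p' r
                      - level_coord m (\<lambda>j. t * p j + (1 - t) * p' j) r"
  shows "0 \<le> defect" "defect \<le> level_scale m"
proof -
  let ?J = "{..<level_dim m}"
  have "defect = level_scale m * (t * kl_div ?J p (rat_vec r) + (1 - t) * kl_div ?J p' (rat_vec r)
                      - kl_div ?J (\<lambda>j. t * p j + (1 - t) * p' j) (rat_vec r))"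
    by (simp add: defect_def level_coord_def algebra_simps)
  also have "\<dots> = level_scale m * (t * neg_entropy ?J p + (1 - t) * neg_entropy ?J p'
                      - neg_entropy ?J (\<lambda>j. t * p j + (1 - t) * p' j))"
    using assms level_simplex_pos rat_weights_pos by (subst kl_div_convex_defect) auto
  finally show "0 \<le> defect" "defect \<le> level_scale m"
    using neg_entropy_convex_defect[of ?J p p' t] assms level_simplex_pos level_scale_pos[OF assms(1)]
    by (auto simp: level_simplex_def intro: mult_right_le_one_le)
qed

lemma exists_rat_weights_kl_div_le:
  assumes p: "p \<in> level_simplex m" and "0 < \<eta>"
  shows "\<exists>r. rat_weights m r \<and> kl_div {..<level_dim m} p (rat_vec r) \<le> \<eta>"
proof -
  define e where "e = min (level_floor m) (\<eta> * level_floor m)"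
  have e: "0 < e" "e \<le> level_floor m" "e / level_floor m \<le> \<eta>"
    using level_floor_pos[of m] \<open>0 < \<eta>\<close> by (auto simp: e_def divide_le_eq)
  obtain r where r: "length r = level_dim m"
    and approx: "\<And>j. j < level_dim m \<Longrightarrow> p j - e < rat_vec r j \<and> rat_vec r j < p j"
    using exists_rat_list_approx_below[OF \<open>0 < e\<close>, of "level_dim m" p]
    unfolding rat_vec_def by blast
  have close: "level_floor m \<le> rat_vec r j \<and> rat_vec r j \<le> p j \<and> p j \<le> rat_vec r j + e"
    if "j < level_dim m" for j
    using approx[OF that] p that e(2) by (force simp: level_simplex_def)
  have "(\<Sum>j<level_dim m. rat_vec r j) \<le> (\<Sum>j<level_dim m. p j)"
    using close by (intro sum_mono) auto
  with r close p have "rat_weights m r"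
    by (simp add: rat_weights_def level_simplex_def)
  moreover have "kl_div {..<level_dim m} p (rat_vec r) \<le> e / level_floor m"
    using close p level_floor_pos
    by (intro kl_div_le_of_approx_below) (auto simp: level_simplex_def)
  ultimately show ?thesis
    using e(3) by force
qed

definition level_corner :: "nat \<Rightarrow> nat \<Rightarrow> nat \<Rightarrow> real" where
  "level_corner m k j =
     2 * level_floor m + (if j = k then 1 - 2 * level_dim m * level_floor m else 0)"

lemma twice_level_dim_times_floor_le: "1 \<le> m \<Longrightarrow> 2 * real (level_dim m) * level_floor m \<le> 1"
  using level_dim_times_floor[of m] power_increasing[of 1 m "2::real"]
  by (simp add: mult.assoc)

lemma level_corner_column_sum: "j < level_dim m \<Longrightarrow> (\<Sum>k<level_dim m. level_corner m k j) = 1"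
  by (simp add: level_corner_def sum.distrib)

lemma level_corner_mem: "1 \<le> m \<Longrightarrow> k < level_dim m \<Longrightarrow> level_corner m k \<in> level_simplex m"
  using twice_level_dim_times_floor_le[of m]
  by (simp add: level_simplex_def level_corner_def sum.distrib)

lemma neg_entropy_level_corner_ge:
  assumes m: "1 \<le> m" and k: "k < level_dim m"
  shows "- 2 * level_dim m * level_floor m * (1 - ln (level_floor m))
           \<le> neg_entropy {..<level_dim m} (level_corner m k)"
proof -
  let ?J = "{..<level_dim m}" and ?c = "level_corner m k" and ?\<delta> = "level_floor m"
  have split: "neg_entropy ?J ?c = ?c k * ln (?c k) + (\<Sum>j\<in>?J - {k}. ?c j * ln (?c j))"
    unfolding neg_entropy_def using k by (intro sum.remove) auto
  have "- 2 * level_dim m * ?\<delta> \<le> ?c k - 1"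
    using level_floor_pos[of m] by (simp add: level_corner_def)
  also have "\<dots> \<le> ?c k * ln (?c k)"
    using twice_level_dim_times_floor_le[OF m] level_floor_pos[of m]
    by (intro x_minus_one_le_xlnx) (simp add: level_corner_def)
  finally have corner: "- 2 * level_dim m * ?\<delta> \<le> ?c k * ln (?c k)" .
  have "2 * ?\<delta> * ln ?\<delta> \<le> ?c j * ln (?c j)" if "j \<in> ?J - {k}" for j
    using that level_floor_pos[of m] by (simp add: level_corner_def mult_left_mono)
  then have "real (card (?J - {k})) * (2 * ?\<delta> * ln ?\<delta>) \<le> (\<Sum>j\<in>?J - {k}. ?c j * ln (?c j))"
    using sum_mono[of "?J - {k}" "\<lambda>_. 2 * ?\<delta> * ln ?\<delta>"] by simp
  moreover have "real (level_dim m) * (2 * ?\<delta> * ln ?\<delta>) \<le> real (card (?J - {k})) * (2 * ?\<delta> * ln ?\<delta>)"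
    using level_floor_pos[of m] k
    by (intro mult_right_mono_neg) (auto simp: ln_level_floor mult_nonneg_nonpos)
  ultimately show ?thesis
    using split corner by (simp add: algebra_simps)
qed

lemma level_coord_corner_average_ge:
  assumes m: "1 \<le> m" and r: "rat_weights m r"
  shows "1 - 10 / real m
           \<le> (\<Sum>k<level_dim m. level_coord m (level_corner m k) r) / level_dim m"
proof -
  let ?J = "{..<level_dim m}" and ?N = "real (level_dim m)" and ?\<delta> = "level_floor m"
  have N: "0 < ?N"
    using level_dim_pos[of m] by simp
  have "?N * (- 2 * ?N * ?\<delta> * (1 - ln ?\<delta>)) + ?N * ln ?N
      \<le> (\<Sum>k\<in>?J. neg_entropy ?J (level_corner m k)) + card ?J * ln (card ?J)"
    using neg_entropy_level_corner_ge[OF m] sum_mono[of ?J "\<lambda>_. - 2 * ?N * ?\<delta> * (1 - ln ?\<delta>)"]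
    by simp
  also have "\<dots> \<le> (\<Sum>k\<in>?J. kl_div ?J (level_corner m k) (rat_vec r))"
    using r level_corner_column_sum level_simplex_pos[OF level_corner_mem[OF m]] rat_weights_pos[OF r]
    by (intro sum_kl_div_ge) (auto simp: rat_weights_def)
  finally have "ln ?N - 2 * ?N * ?\<delta> * (1 - ln ?\<delta>)
      \<le> (\<Sum>k\<in>?J. kl_div ?J (level_corner m k) (rat_vec r)) / ?N"
    using N by (simp add: field_simps)
  then have "level_scale m * (ln ?N - 2 * ?N * ?\<delta> * (1 - ln ?\<delta>)) - 1
      \<le> level_scale m * ((\<Sum>k\<in>?J. kl_div ?J (level_corner m k) (rat_vec r)) / ?N) - 1"
    using level_scale_nonneg[of m] by (intro diff_right_mono mult_left_mono)
  also have "\<dots> = (\<Sum>k\<in>?J. level_coord m (level_corner m k) r) / ?N"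
    using N by (simp add: level_coord_def sum_subtractf sum_distrib_left field_simps)
  finally show ?thesis
    using level_scale_asymptotics[OF m] by simp
qed

section \<open>Embedding into bounded sequences\<close>

definition level_families :: "nat \<Rightarrow> (nat \<Rightarrow> nat \<Rightarrow> real) set" where
  "level_families m0 = {M. \<forall>m\<ge>m0. M m \<in> level_simplex m}"

text \<open>Coordinates of the sequence space are the pairs (m, r) under the countable encoding
  from_nat; pairs that are not admissible get coordinate 0.\<close>

definition family_coord :: "nat \<Rightarrow> (nat \<Rightarrow> nat \<Rightarrow> real) \<Rightarrow> nat \<times> rat list \<Rightarrow> real" where
  "family_coord m0 M =
     (\<lambda>(m, r). if m0 \<le> m \<and> rat_weights m r then level_coord m (M m) r else 0)"

definition embed_family :: "nat \<Rightarrow> (nat \<Rightarrow> nat \<Rightarrow> real) \<Rightarrow> (nat \<Rightarrow>\<^sub>C real)" where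
  "embed_family m0 M = Bcontfun (family_coord m0 M \<circ> from_nat)"

lemma abs_family_coord_le:
  "1 \<le> m0 \<Longrightarrow> M \<in> level_families m0 \<Longrightarrow> \<bar>family_coord m0 M x\<bar> \<le> 1"
  by (cases x) (auto simp: family_coord_def level_families_def intro: abs_level_coord_le)

lemma apply_embed_family:
  assumes "1 \<le> m0" "M \<in> level_families m0"
  shows "apply_bcontfun (embed_family m0 M) i = family_coord m0 M (from_nat i)"
proof -
  have "family_coord m0 M \<circ> from_nat \<in> bcontfun"
    using abs_family_coord_le[OF assms] by (intro bcontfun_normI[where b = 1]) auto
  then show ?thesis
    by (simp add: embed_family_def Bcontfun_inverse)
qed

lemma norm_embed_family_le: "1 \<le> m0 \<Longrightarrow> M \<in> level_families m0 \<Longrightarrow> norm (embed_family m0 M) \<le> 1"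
  by (intro norm_bound) (simp add: apply_embed_family abs_family_coord_le)

lemma level_families_convex_comb:
  "M \<in> level_families m0 \<Longrightarrow> M' \<in> level_families m0 \<Longrightarrow> 0 \<le> t \<Longrightarrow> t \<le> 1
    \<Longrightarrow> (\<lambda>m j. t * M m j + (1 - t) * M' m j) \<in> level_families m0"
  by (simp add: level_families_def level_simplex_convex_comb)

lemma dist_embed_family_convex_comb_le:
  assumes m0: "1 \<le> m0" and M: "M \<in> level_families m0" and M': "M' \<in> level_families m0"
    and t: "0 \<le> t" "t \<le> 1"
  shows "dist (t *\<^sub>R embed_family m0 M + (1 - t) *\<^sub>R embed_family m0 M')
              (embed_family m0 (\<lambda>m j. t * M m j + (1 - t) * M' m j)) \<le> level_scale m0"
proof (unfold dist_norm, rule norm_bound)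
  fix i
  obtain m :: nat and r :: "rat list" where i: "from_nat i = (m, r)"
    by fastforce
  have "\<bar>t * family_coord m0 M (m, r) + (1 - t) * family_coord m0 M' (m, r)
          - family_coord m0 (\<lambda>m j. t * M m j + (1 - t) * M' m j) (m, r)\<bar> \<le> level_scale m0"
  proof (cases "m0 \<le> m \<and> rat_weights m r")
    case True
    then have "1 \<le> m" "M m \<in> level_simplex m" "M' m \<in> level_simplex m"
      using m0 M M' by (auto simp: level_families_def)
    with True t have "\<bar>t * level_coord m (M m) r + (1 - t) * level_coord m (M' m) r
          - level_coord m (\<lambda>j. t * M m j + (1 - t) * M' m j) r\<bar> \<le> level_scale m"
      using level_coord_convex_defect[of m "M m" "M' m" r t] by linarith
    also have "\<dots> \<le> level_scale m0"
      using True m0 by (intro level_scale_antimono) auto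
    finally show ?thesis
      using True by (simp add: family_coord_def)
  qed (auto simp: family_coord_def level_scale_nonneg)
  then show "norm (apply_bcontfun (t *\<^sub>R embed_family m0 M + (1 - t) *\<^sub>R embed_family m0 M'
              - embed_family m0 (\<lambda>m j. t * M m j + (1 - t) * M' m j)) i) \<le> level_scale m0"
    using m0 M M' t level_families_convex_comb[OF M M' t] by (simp add: apply_embed_family i)
qed

definition corner_family :: "nat \<Rightarrow> nat \<Rightarrow> nat \<Rightarrow> nat \<Rightarrow> real" where
  "corner_family m k m' = level_corner m' (if m' = m then k else 0)"

definition level_barycenter :: "nat \<Rightarrow> nat \<Rightarrow> (nat \<Rightarrow>\<^sub>C real)" where
  "level_barycenter m0 m =
     (\<Sum>k<level_dim m. (1 / level_dim m) *\<^sub>R embed_family m0 (corner_family m k))"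

lemma corner_family_mem:
  "1 \<le> m0 \<Longrightarrow> k < level_dim m \<Longrightarrow> corner_family m k \<in> level_families m0"
  by (auto simp: level_families_def corner_family_def intro: level_corner_mem level_dim_pos)

lemma level_barycenter_in_hull:
  assumes "1 \<le> m0"
  shows "level_barycenter m0 m \<in> convex hull (embed_family m0 ` level_families m0)"
  unfolding level_barycenter_def
proof (rule convex_sum)
  show "(\<Sum>k<level_dim m. 1 / real (level_dim m)) = 1"
    using level_dim_pos[of m] by simp
  show "embed_family m0 (corner_family m k) \<in> convex hull (embed_family m0 ` level_families m0)"
    if "k \<in> {..<level_dim m}" for k
    using that corner_family_mem[OF assms] by (auto intro: hull_inc)
qed auto

lemma apply_bcontfun_sum: "apply_bcontfun (sum f K) x = (\<Sum>k\<in>K. apply_bcontfun (f k) x)"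
  by (induction K rule: infinite_finite_induct) auto

lemma apply_level_barycenter:
  assumes "1 \<le> m0" "m0 \<le> m" "rat_weights m r"
  shows "apply_bcontfun (level_barycenter m0 m) (to_nat (m, r))
           = (\<Sum>k<level_dim m. level_coord m (level_corner m k) r) / level_dim m"
  using assms corner_family_mem[OF assms(1)]
  by (simp add: level_barycenter_def apply_bcontfun_sum apply_embed_family family_coord_def
      corner_family_def sum_divide_distrib)

lemma dist_level_barycenter_ge:
  assumes m0: "1 \<le> m0" and m: "m0 \<le> m" and M: "M \<in> level_families m0"
  shows "2 - 10 / real m \<le> dist (level_barycenter m0 m) (embed_family m0 M)"
proof (rule field_le_epsilon)
  fix e :: real
  assume "0 < e"
  have m1: "1 \<le> m" and p: "M m \<in> level_simplex m"
    using m0 m M by (auto simp: level_families_def)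
  obtain r where r: "rat_weights m r"
    and kl: "kl_div {..<level_dim m} (M m) (rat_vec r) \<le> e / level_scale m"
    using exists_rat_weights_kl_div_le[OF p, of "e / level_scale m"] \<open>0 < e\<close> level_scale_pos[OF m1]
    by auto
  have "apply_bcontfun (embed_family m0 M) (to_nat (m, r)) = level_coord m (M m) r"
    using m0 m M r by (simp add: apply_embed_family family_coord_def)
  also have "\<dots> \<le> e - 1"
    using kl level_scale_pos[OF m1] by (simp add: level_coord_def field_simps)
  finally have "2 - 10 / real m - e
      \<le> apply_bcontfun (level_barycenter m0 m - embed_family m0 M) (to_nat (m, r))"
    using level_coord_corner_average_ge[OF m1 r] apply_level_barycenter[OF m0 m r] by simp
  also have "\<dots> \<le> dist (level_barycenter m0 m) (embed_family m0 M)"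
    using norm_bounded dist_norm by (metis abs_le_D1 real_norm_def)
  finally show "2 - 10 / real m \<le> dist (level_barycenter m0 m) (embed_family m0 M) + e"
    by simp
qed

lemma infdist_level_barycenter_ge:
  assumes "1 \<le> m0" "m0 \<le> m"
  shows "2 - 10 / real m \<le> infdist (level_barycenter m0 m) (embed_family m0 ` level_families m0)"
proof -
  have "embed_family m0 ` level_families m0 \<noteq> {}"
    using corner_family_mem[OF assms(1) level_dim_pos] by blast
  then show ?thesis
    unfolding infdist_notempty[OF \<open>_ \<noteq> {}\<close>]
    using dist_level_barycenter_ge[OF assms] by (intro cINF_greatest) auto
qed

lemma embed_families_subset_cball:
  "1 \<le> m0 \<Longrightarrow> embed_family m0 ` level_families m0 \<subseteq> cball 0 1"
  using norm_embed_family_le by (auto simp: dist_norm)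

lemma eps_convex_embed_families:
  assumes m0: "1 \<le> m0"
  shows "eps_convex (level_scale m0) (embed_family m0 ` level_families m0)"
proof (rule eps_convexI)
  fix a b and t :: real
  assume "a \<in> embed_family m0 ` level_families m0" "b \<in> embed_family m0 ` level_families m0"
    and t: "0 \<le> t" "t \<le> 1"
  then obtain M M' where M: "M \<in> level_families m0" "a = embed_family m0 M"
    and M': "M' \<in> level_families m0" "b = embed_family m0 M'"
    by blast
  let ?C = "\<lambda>m j. t * M m j + (1 - t) * M' m j"
  have "embed_family m0 ?C \<in> embed_family m0 ` level_families m0"
    using level_families_convex_comb[OF M(1) M'(1) t] by blast
  with dist_embed_family_convex_comb_le[OF m0 M(1) M'(1) t]
  show "\<exists>c\<in>embed_family m0 ` level_families m0. dist (t *\<^sub>R a + (1 - t) *\<^sub>R b) c \<le> level_scale m0"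
    unfolding M(2) M'(2) by blast
qed

lemma hausdorff_dist_embed_families:
  assumes m0: "1 \<le> m0"
  defines "A \<equiv> embed_family m0 ` level_families m0"
  shows "hausdorff_dist A (convex hull A) = 2"
proof (rule hausdorff_dist_convex_hull_eq_2)
  show "A \<subseteq> cball 0 1"
    unfolding A_def using embed_families_subset_cball[OF m0] .
  fix e :: real
  assume "0 < e"
  then obtain m where m: "m0 \<le> m" "10 / real m < e"
    using exists_nat_ge_const_over_less[of e m0 10] by blast
  show "\<exists>c\<in>convex hull A. 2 - e \<le> infdist c A"
  proof (rule bexI[of _ "level_barycenter m0 m"])
    show "2 - e \<le> infdist (level_barycenter m0 m) A"
      using infdist_level_barycenter_ge[OF m0 m(1)] m(2) by (simp add: A_def)
  qed (simp add: A_def level_barycenter_in_hull[OF m0])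
qed

theorem theorem7p10:
  shows "\<exists>Y :: (nat \<Rightarrow>\<^sub>C real) set. subspace Y \<and> closed Y \<and>
     (\<forall>eps>0. \<exists>A. A \<subseteq> Y \<inter> cball 0 1 \<and> eps_convex eps A \<and>
        hausdorff_dist A (convex hull A) = 2)"
proof (rule exI[of _ UNIV], intro conjI allI impI subspace_UNIV closed_UNIV)
  fix eps :: real
  assume "0 < eps"
  then obtain m0 :: nat where m0: "1 \<le> m0" "2 / real m0 < eps"
    using exists_nat_ge_const_over_less[of eps 1 2] by blast
  then have "eps_convex eps (embed_family m0 ` level_families m0)"
    using eps_convex_mono[OF eps_convex_embed_families[OF m0(1)]] level_scale_le[OF m0(1)] by simp
  then show "\<exists>A :: (nat \<Rightarrow>\<^sub>C real) set.
      A \<subseteq> UNIV \<inter> cball 0 1 \<and> eps_convex eps A \<and> hausdorff_dist A (convex hull A) = 2"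
    using embed_families_subset_cball[OF m0(1)] hausdorff_dist_embed_families[OF m0(1)] by blast
qed

end
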